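(* For every prime power $q$ and every integer $n\ge1$, $$\sum_{\lambda\vdash n}\frac{\prod_{s=1}^{\ell(\lambda)-1}(1-q^s)}{a_\lambda(q)}=\frac{1}{q^n-1}.$$
   Context: The sum runs over all partitions $\lambda=(\lambda_1\ge\dots\ge\lambda_m\ge1)$ of $n$; $\ell(\lambda)=m$ is the length; empty products equal $1$. Writing $t_i$ for the number of parts of $\lambda$ equal to $i$, $|\lambda|=\sum_i\lambda_i$ and $n(\lambda)=\sum_{i=1}^{m}(i-1)\lambda_i$, one sets $a_\lambda(q)=q^{|\lambda|+2n(\lambda)}\prod_{i\ge1}\prod_{j=1}^{t_i}(1-q^{-j})$; this equals the order of the automorphism group of the $\mathbb F_q[T]$-module $\bigoplus_{i=1}^m\mathbb F_q[T]/(T^{\lambda_i})$. *)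

theory Defs
  imports Complex_Main "HOL-Computational_Algebra.Primes"
begin

definition partitions_of :: "nat \<Rightarrow> nat list set" where
  "partitions_of n = {xs. sorted_wrt (\<ge>) xs \<and> (\<forall>x\<in>set xs. 0 < x) \<and> sum_list xs = n}"

text \<open>n(lambda) = sum_{i=1}^m (i-1) lambda_i (0-based index i here).\<close>
definition n_part :: "nat list \<Rightarrow> nat" where
  "n_part xs = (\<Sum>i<length xs. i * xs ! i)"

text \<open>a_lambda(q) = q^(|lambda| + 2 n(lambda)) * prod_{i>=1} prod_{j=1}^{t_i} (1 - q^(-j)),
  where t_i = number of parts equal to i (parts i not occurring contribute an empty product).\<close>
definition a_part :: "nat list \<Rightarrow> real \<Rightarrow> real" where
  "a_part xs q = q ^ (sum_list xs + 2 * n_part xs) *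
     (\<Prod>i\<in>set xs. \<Prod>j=1..count_list xs i. (1 - 1 / q ^ j))"

end

theory Submission
  imports Defs
begin

text \<open>Put \<open>x = 1/q\<close> and \<open>(x;x)_k = (1 - x) \<dots> (1 - x^k)\<close>, so that
  \<open>a_\<lambda>(q) = q^(|\<lambda>| + 2 n(\<lambda>)) \<Prod>_i (x;x)_(t_i)\<close>. Removing the first column of a partition of \<open>n\<close>
  with \<open>m\<close> parts leaves a partition \<open>\<mu>\<close> of \<open>n - m\<close> with at most \<open>m\<close> parts and multiplies
  \<open>1/a\<close> by \<open>x^(m^2) / (x;x)_(m - length \<mu>)\<close>. Strong induction on \<open>n\<close> and the q-Vandermonde
  identity then give the weighted count \<open>x^(m^2 + n - m) [n-1, m-1]_x / (x;x)_m\<close> of the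
  partitions of \<open>n\<close> with \<open>m\<close> parts. Since \<open>\<Prod>_(s<m) (1 - q^s) = (-1)^(m-1) q^(m choose 2) (x;x)_(m-1)\<close>,
  the \<open>m\<close>-th term of the sum becomes \<open>-x^n/(1 - x^n) * (-1)^m x^(m choose 2) [n, m]_x\<close>, and
  Gauss' identity \<open>\<Sum>_m (-1)^m x^(m choose 2) [n, m]_x = 0\<close> leaves only the missing term \<open>m = 0\<close>,
  which is \<open>x^n/(1 - x^n) = 1/(q^n - 1)\<close>.\<close>

section \<open>Gaussian binomial coefficients\<close>

lemma zero_choose_two: "0 choose 2 = 0"
  by (simp add: binomial_eq_0)

lemma Suc_choose_two: "Suc m choose 2 = (m choose 2) + m"
  by (simp add: numeral_2_eq_2)

lemma square_eq_add_twice_choose_two: "m * m = m + 2 * (m choose 2)"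
  by (induction m) (simp_all add: zero_choose_two Suc_choose_two algebra_simps)

lemma sum_lessThan_eq_choose_two: "(\<Sum>i<m. i) = m choose 2"
  by (induction m) (simp_all add: zero_choose_two Suc_choose_two)

definition qpochhammer :: "'a::comm_ring_1 \<Rightarrow> nat \<Rightarrow> 'a" where
  "qpochhammer x k = (\<Prod>j=1..k. 1 - x ^ j)"

lemma qpochhammer_0 [simp]: "qpochhammer x 0 = 1"
  by (simp add: qpochhammer_def)

lemma qpochhammer_Suc: "qpochhammer x (Suc k) = qpochhammer x k * (1 - x ^ Suc k)"
  by (simp add: qpochhammer_def prod.nat_ivl_Suc')

lemma qpochhammer_pos:
  fixes x :: real
  assumes "0 < x" "x < 1"
  shows "0 < qpochhammer x k"
proof (induction k)
  case (Suc k)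
  have "x ^ Suc k < 1" using assms power_Suc_less_one by blast
  with Suc show ?case by (simp add: qpochhammer_Suc del: power_Suc)
qed simp

fun qbinomial :: "'a::comm_ring_1 \<Rightarrow> nat \<Rightarrow> nat \<Rightarrow> 'a" where
  "qbinomial x n 0 = 1"
| "qbinomial x 0 (Suc k) = 0"
| "qbinomial x (Suc n) (Suc k) = x ^ (n - k) * qbinomial x n k + qbinomial x n (Suc k)"

lemma qbinomial_eq_0 [simp]: "n < k \<Longrightarrow> qbinomial x n k = 0"
proof (induction n arbitrary: k)
  case 0 then show ?case by (cases k) auto
next
  case (Suc n) then show ?case by (cases k) auto
qed

lemma qbinomial_n_n [simp]: "qbinomial x n n = 1"
  by (induction n) simp_all

lemma qpochhammer_qbinomial:
  "k \<le> n \<Longrightarrow> qpochhammer x k * qpochhammer x (n - k) * qbinomial x n k = qpochhammer x n"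
proof (induction n arbitrary: k)
  case 0 then show ?case by simp
next
  case (Suc n)
  show ?case
  proof (cases k)
    case 0 then show ?thesis by simp
  next
    case (Suc j)
    show ?thesis
    proof (cases "j = n")
      case True then show ?thesis using Suc by simp
    next
      case False
      with Suc \<open>k \<le> Suc n\<close> have "j < n" by simp
      have e: "x ^ (n - j) * x ^ Suc j = x ^ Suc n"
        using \<open>j < n\<close> unfolding power_add[symmetric] by (simp del: power_Suc)
      have p1: "qpochhammer x k = (1 - x ^ Suc j) * qpochhammer x j"
        using Suc by (simp add: qpochhammer_Suc)
      have p2: "qpochhammer x (n - j) = (1 - x ^ (n - j)) * qpochhammer x (n - k)"
        using Suc \<open>j < n\<close> qpochhammer_Suc[of x "n - Suc j"] by (simp add: Suc_diff_Suc)
      have "qpochhammer x k * qpochhammer x (Suc n - k) * qbinomial x (Suc n) k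
          = x ^ (n - j) * (qpochhammer x k * qpochhammer x (n - j) * qbinomial x n j)
            + qpochhammer x k * qpochhammer x (n - j) * qbinomial x n k"
        using Suc by (simp add: algebra_simps)
      also have "\<dots> = x ^ (n - j) * (1 - x ^ Suc j) * (qpochhammer x j * qpochhammer x (n - j) * qbinomial x n j)
            + (1 - x ^ (n - j)) * (qpochhammer x k * qpochhammer x (n - k) * qbinomial x n k)"
        unfolding p1 p2 by (simp only: ac_simps)
      also have "\<dots> = (x ^ (n - j) * (1 - x ^ Suc j) + (1 - x ^ (n - j))) * qpochhammer x n"
        using Suc.IH[of j] Suc.IH[of k] Suc \<open>j < n\<close> by (simp add: algebra_simps)
      also have "\<dots> = qpochhammer x (Suc n)"
        using e by (simp add: qpochhammer_Suc algebra_simps)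
      finally show ?thesis .
    qed
  qed
qed

lemma qbinomial_vandermonde:
  "qbinomial x (M + N) K = (\<Sum>a\<le>K. qbinomial x M a * qbinomial x N (K - a) * x ^ (a * (N + a - K)))"
proof (induction M arbitrary: K)
  case 0
  show ?case
    by (cases K) (simp_all only: sum.atMost_Suc_shift, simp_all)
next
  case (Suc M)
  let ?t = "\<lambda>M K a. qbinomial x M a * qbinomial x N (K - a) * x ^ (a * (N + a - K))"
  show ?case
  proof (cases K)
    case 0 then show ?thesis by simp
  next
    case (Suc K')
    have shifted: "x ^ (M - a) * qbinomial x M a * qbinomial x N (K' - a) * x ^ (Suc a * (N + Suc a - Suc K'))
        = x ^ (M + N - K') * ?t M K' a" for a
    proof (cases "a \<le> M \<and> K' - a \<le> N")
      case True
      then obtain m' c where "M = a + m'" "N + a = K' + c"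
        by (metis le_Suc_ex le_diff_conv)
      then have "M - a + Suc a * (N + Suc a - Suc K') = M + N - K' + a * (N + a - K')"
        by (simp add: algebra_simps)
      then have exps: "x ^ (M - a) * x ^ (Suc a * (N + Suc a - Suc K')) = x ^ (M + N - K') * x ^ (a * (N + a - K'))"
        by (metis power_add)
      have "x ^ (M - a) * qbinomial x M a * qbinomial x N (K' - a) * x ^ (Suc a * (N + Suc a - Suc K'))
          = qbinomial x M a * qbinomial x N (K' - a) * (x ^ (M - a) * x ^ (Suc a * (N + Suc a - Suc K')))"
        by (simp only: mult_ac)
      also have "\<dots> = x ^ (M + N - K') * ?t M K' a"
        unfolding exps by (simp only: mult_ac)
      finally show ?thesis .
    qed auto
    have "(\<Sum>a\<le>K. ?t (Suc M) K a)
        = qbinomial x N (Suc K') + (\<Sum>a\<le>K'. ?t (Suc M) K (Suc a))"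
      using Suc by (simp only: sum.atMost_Suc_shift) simp
    also have "\<dots> = qbinomial x N (Suc K') + (\<Sum>a\<le>K'. ?t M K (Suc a))
        + (\<Sum>a\<le>K'. x ^ (M - a) * qbinomial x M a * qbinomial x N (K' - a) * x ^ (Suc a * (N + Suc a - Suc K')))"
      using Suc by (simp add: sum.distrib algebra_simps)
    also have "qbinomial x N (Suc K') + (\<Sum>a\<le>K'. ?t M K (Suc a)) = (\<Sum>a\<le>K. ?t M K a)"
      using Suc by (simp only: sum.atMost_Suc_shift) simp
    also have "\<dots> = qbinomial x (M + N) K"
      using Suc.IH by simp
    also have "(\<Sum>a\<le>K'. x ^ (M - a) * qbinomial x M a * qbinomial x N (K' - a) * x ^ (Suc a * (N + Suc a - Suc K')))
        = x ^ (M + N - K') * qbinomial x (M + N) K'"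
      unfolding shifted Suc.IH by (simp add: sum_distrib_left)
    finally show ?thesis
      using Suc by simp
  qed
qed

lemma qbinomial_alternating_sum_Suc:
  "(\<Sum>m\<le>Suc n. (-1) ^ m * x ^ (m choose 2) * qbinomial x (Suc n) m)
    = (1 - x ^ n) * (\<Sum>m\<le>n. (-1) ^ m * x ^ (m choose 2) * qbinomial x n m)"
proof -
  let ?t = "\<lambda>m. (-1) ^ m * x ^ (m choose 2) * qbinomial x n m"
  have shifted: "(-1) ^ Suc k * x ^ (Suc k choose 2) * (x ^ (n - k) * qbinomial x n k) = - (x ^ n * ?t k)"
    if "k \<le> n" for k
  proof -
    have "(Suc k choose 2) + (n - k) = n + (k choose 2)"
      using that by (simp add: Suc_choose_two)
    then have "x ^ (Suc k choose 2) * x ^ (n - k) = x ^ n * x ^ (k choose 2)"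
      by (metis power_add)
    then show ?thesis by (simp add: algebra_simps)
  qed
  have "(\<Sum>m\<le>Suc n. (-1) ^ m * x ^ (m choose 2) * qbinomial x (Suc n) m)
      = 1 + (\<Sum>k\<le>n. (-1) ^ Suc k * x ^ (Suc k choose 2) * qbinomial x n (Suc k))
        + (\<Sum>k\<le>n. (-1) ^ Suc k * x ^ (Suc k choose 2) * (x ^ (n - k) * qbinomial x n k))"
    by (simp only: sum.atMost_Suc_shift) (simp add: sum.distrib algebra_simps zero_choose_two del: power_Suc)
  also have "1 + (\<Sum>k\<le>n. (-1) ^ Suc k * x ^ (Suc k choose 2) * qbinomial x n (Suc k))
      = (\<Sum>m\<le>Suc n. ?t m)"
    by (simp only: sum.atMost_Suc_shift) (simp add: zero_choose_two)
  also have "\<dots> = (\<Sum>m\<le>n. ?t m)"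
    by simp
  also have "(\<Sum>k\<le>n. (-1) ^ Suc k * x ^ (Suc k choose 2) * (x ^ (n - k) * qbinomial x n k))
      = (\<Sum>k\<le>n. - (x ^ n * ?t k))"
    by (rule sum.cong[OF refl]) (rule shifted, simp)
  also have "\<dots> = - (x ^ n * (\<Sum>m\<le>n. ?t m))"
    by (simp only: sum_distrib_left sum_negf)
  finally show ?thesis
    by (simp add: algebra_simps)
qed

lemma qbinomial_alternating_sum:
  "1 \<le> n \<Longrightarrow> (\<Sum>m\<le>n. (-1) ^ m * x ^ (m choose 2) * qbinomial x n m) = 0"
proof (induction n rule: dec_induct)
  case base
  then show ?case using qbinomial_alternating_sum_Suc[of x 0] by (simp add: zero_choose_two)
next
  case (step n)
  then show ?case using qbinomial_alternating_sum_Suc[of x n] by simp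
qed

lemma qbinomial_eq_div:
  fixes x :: real
  assumes "0 < x" "x < 1" "k \<le> n"
  shows "qbinomial x n k = qpochhammer x n / (qpochhammer x k * qpochhammer x (n - k))"
proof -
  have "qpochhammer x k * qpochhammer x (n - k) \<noteq> 0"
    using qpochhammer_pos[OF assms(1,2)] by (simp add: less_imp_neq[symmetric])
  moreover have "qbinomial x n k * (qpochhammer x k * qpochhammer x (n - k)) = qpochhammer x n"
    using qpochhammer_qbinomial[OF assms(3)] by (simp only: ac_simps)
  ultimately show ?thesis
    by (simp add: nonzero_eq_divide_eq)
qed

lemma qbinomial_symmetric:
  fixes x :: real
  assumes "0 < x" "x < 1" "k \<le> n"
  shows "qbinomial x n (n - k) = qbinomial x n k"
proof -
  have "n - (n - k) = k"
    using assms(3) by simp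
  then show ?thesis
    unfolding qbinomial_eq_div[OF assms(1,2) diff_le_self] qbinomial_eq_div[OF assms] by (simp only: mult.commute)
qed

lemma qbinomial_absorption:
  fixes x :: real
  assumes "0 < x" "x < 1" "1 \<le> k" "k \<le> n"
  shows "(1 - x ^ k) * qbinomial x n k = (1 - x ^ n) * qbinomial x (n - 1) (k - 1)"
proof -
  obtain j m where jm: "k = Suc j" "n = Suc m" "j \<le> m"
    using assms(3,4) by (cases k; cases n) auto
  define c d where "c = 1 - x ^ k" and "d = 1 - x ^ n"
  have "qpochhammer x i \<noteq> 0" for i
    using qpochhammer_pos[OF assms(1,2)] by (simp add: less_imp_neq[symmetric])
  moreover have "c \<noteq> 0"
    using jm power_Suc_less_one[OF assms(1,2)] unfolding c_def by (metis less_irrefl right_minus_eq)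
  moreover have "qbinomial x n k = qpochhammer x m * d / (qpochhammer x j * c * qpochhammer x (m - j))"
    using jm unfolding qbinomial_eq_div[OF assms(1,2,4)] c_def d_def by (simp add: qpochhammer_Suc del: power_Suc)
  moreover have "qbinomial x (n - 1) (k - 1) = qpochhammer x m / (qpochhammer x j * qpochhammer x (m - j))"
    using jm assms by (simp add: qbinomial_eq_div)
  ultimately show ?thesis
    unfolding c_def[symmetric] d_def[symmetric] by simp
qed

lemma prod_one_minus_power:
  fixes q :: "'a::field"
  assumes "q \<noteq> 0"
  shows "(\<Prod>s=1..k. 1 - q ^ s) = (-1) ^ k * q ^ (Suc k choose 2) * qpochhammer (1 / q) k"
proof (induction k)
  case (Suc k)
  have "(\<Prod>s=1..Suc k. 1 - q ^ s) = (\<Prod>s=1..k. 1 - q ^ s) * (1 - q ^ Suc k)"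
    by (simp add: prod.nat_ivl_Suc')
  also have "1 - q ^ Suc k = - (q ^ Suc k * (1 - (1 / q) ^ Suc k))"
    using assms by (simp add: field_simps)
  also note Suc.IH
  also have "(-1) ^ k * q ^ (Suc k choose 2) * qpochhammer (1 / q) k * - (q ^ Suc k * (1 - (1 / q) ^ Suc k))
      = (-1) ^ Suc k * (q ^ (Suc k choose 2) * q ^ Suc k) * (qpochhammer (1 / q) k * (1 - (1 / q) ^ Suc k))"
    by (simp only: power_Suc) (simp add: algebra_simps)
  also have "q ^ (Suc k choose 2) * q ^ Suc k = q ^ (Suc (Suc k) choose 2)"
    by (simp only: Suc_choose_two[of "Suc k"] power_add)
  finally show ?case
    by (simp only: qpochhammer_Suc)
qed (simp add: Suc_choose_two zero_choose_two)

section \<open>Adding and removing the first column of a partition\<close>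

lemma length_le_sum_list: "\<forall>y\<in>set xs. 0 < (y::nat) \<Longrightarrow> length xs \<le> sum_list xs"
  by (induction xs) auto

lemma length_le_of_partitions_of: "la \<in> partitions_of n \<Longrightarrow> length la \<le> n"
  using length_le_sum_list by (auto simp: partitions_of_def)

lemma finite_partitions_of: "finite (partitions_of n)"
proof -
  have "partitions_of n \<subseteq> {xs. set xs \<subseteq> {0..n} \<and> length xs \<le> n}"
    using length_le_sum_list member_le_sum_list by (fastforce simp: partitions_of_def)
  moreover have "finite {xs. set xs \<subseteq> {0..n} \<and> length xs \<le> n}"
    by (rule finite_lists_length_le) simp
  ultimately show ?thesis by (rule finite_subset)
qed

lemma partitions_of_0: "partitions_of 0 = {[]}"
  by (auto simp: partitions_of_def) (metis gr_implies_not0 list.set_intros(1) neq_Nil_conv)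

definition add_column :: "nat \<Rightarrow> nat list \<Rightarrow> nat list" where
  "add_column m mu = map Suc mu @ replicate (m - length mu) 1"

definition remove_column :: "nat list \<Rightarrow> nat list" where
  "remove_column la = map (\<lambda>y. y - 1) (filter (\<lambda>y. 1 < y) la)"

lemma length_add_column: "length mu \<le> m \<Longrightarrow> length (add_column m mu) = m"
  by (simp add: add_column_def)

lemma sum_list_add_column: "length mu \<le> m \<Longrightarrow> sum_list (add_column m mu) = sum_list mu + m"
  by (simp add: add_column_def sum_list_Suc sum_list_replicate)

lemma remove_add_column: "\<forall>y\<in>set mu. 0 < y \<Longrightarrow> remove_column (add_column m mu) = mu"
proof -
  assume "\<forall>y\<in>set mu. 0 < y"
  then have "filter (\<lambda>y. 1 < y) (map Suc mu) = map Suc mu"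
    by (auto simp: filter_id_conv)
  moreover have "filter (\<lambda>y. 1 < y) (replicate r (1::nat)) = []" for r
    by (induction r) auto
  ultimately show ?thesis
    by (simp add: remove_column_def add_column_def comp_def)
qed

lemma add_remove_column:
  "sorted_wrt (\<ge>) la \<Longrightarrow> \<forall>y\<in>set la. 0 < y \<Longrightarrow> add_column (length la) (remove_column la) = la"
proof (induction la)
  case Nil then show ?case by (simp add: add_column_def remove_column_def)
next
  case (Cons a la)
  show ?case
  proof (cases "1 < a")
    case True
    have "length (filter (\<lambda>y. 1 < y) la) \<le> length la" by (rule length_filter_le)
    then have "add_column (length (a # la)) (remove_column (a # la)) = a # add_column (length la) (remove_column la)"
      using True by (simp add: add_column_def remove_column_def Suc_diff_le)
    then show ?thesis using Cons by simp
  next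
    case False
    with Cons.prems have all1: "\<forall>y\<in>set (a # la). y = 1"
      by fastforce
    then have "filter (\<lambda>y. 1 < y) (a # la) = []"
      by (auto simp: filter_empty_conv)
    then have "add_column (length (a # la)) (remove_column (a # la)) = replicate (length (a # la)) 1"
      by (simp add: add_column_def remove_column_def)
    also have "\<dots> = a # la"
      using replicate_length_same[OF all1] .
    finally show ?thesis .
  qed
qed

lemma add_column_in_partitions_of:
  "mu \<in> partitions_of N \<Longrightarrow> length mu \<le> m \<Longrightarrow> add_column m mu \<in> partitions_of (N + m)"
proof -
  have "sorted_wrt (\<ge>) (replicate r (1::nat))" for r
    by (induction r) auto
  then show "mu \<in> partitions_of N \<Longrightarrow> length mu \<le> m \<Longrightarrow> add_column m mu \<in> partitions_of (N + m)"
    using sum_list_add_column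
    by (auto simp: partitions_of_def add_column_def sorted_wrt_append sorted_wrt_map)
qed

lemma remove_column_in_partitions_of:
  assumes "la \<in> partitions_of n"
  shows "remove_column la \<in> partitions_of (n - length la)" "length (remove_column la) \<le> length la"
proof -
  have s: "sorted_wrt (\<ge>) la" and p: "\<forall>y\<in>set la. 0 < y" and sm: "sum_list la = n"
    using assms by (auto simp: partitions_of_def)
  show l: "length (remove_column la) \<le> length la"
    by (simp add: remove_column_def)
  have "sum_list la = sum_list (remove_column la) + length la"
    using sum_list_add_column[OF l] add_remove_column[OF s p] by simp
  moreover have "sorted_wrt (\<ge>) (remove_column la)"
    using s by (auto simp: remove_column_def sorted_wrt_map intro: sorted_wrt_filter sorted_wrt_mono_rel[of _ "(\<ge>)"])
  moreover have "\<forall>y\<in>set (remove_column la). 0 < y"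
    by (auto simp: remove_column_def)
  ultimately show "remove_column la \<in> partitions_of (n - length la)"
    using sm by (auto simp: partitions_of_def)
qed

lemma n_part_add_column:
  assumes "length mu \<le> m"
  shows "n_part (add_column m mu) = n_part mu + (m choose 2)"
proof -
  let ?L = "length mu"
  have nth: "add_column m mu ! i = (if i < ?L then Suc (mu ! i) else 1)" if "i < m" for i
    using that assms by (simp add: add_column_def nth_append)
  have "n_part (add_column m mu) = (\<Sum>i<m. (if i < ?L then i * mu ! i else 0) + i)"
    unfolding n_part_def length_add_column[OF assms] by (rule sum.cong) (auto simp: nth)
  also have "\<dots> = (\<Sum>i\<in>{..<m} \<inter> {i. i < ?L}. i * mu ! i) + (\<Sum>i<m. i)"
    by (simp add: sum.distrib sum.inter_restrict)
  also have "{..<m} \<inter> {i. i < ?L} = {..<?L}"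
    using assms by auto
  finally show ?thesis
    by (simp add: n_part_def sum_lessThan_eq_choose_two)
qed

lemma prod_qpochhammer_count_add_column:
  assumes "\<forall>y\<in>set mu. 0 < y"
  shows "(\<Prod>i\<in>set (add_column m mu). qpochhammer x (count_list (add_column m mu) i))
       = qpochhammer x (m - length mu) * (\<Prod>i\<in>set mu. qpochhammer x (count_list mu i))"
proof -
  let ?r = "m - length mu"
  have count_replicate: "count_list (replicate r a) b = (if a = b then r else 0)" for r and a b :: nat
    by (induction r) auto
  have count_Suc: "count_list (add_column m mu) (Suc i) = count_list mu i" if "i \<in> set mu" for i
    using assms that by (auto simp: add_column_def count_replicate count_list_map_conv)
  have one_notin: "1 \<notin> Suc ` set mu"
    using assms by auto
  then have count_1: "count_list (add_column m mu) 1 = ?r"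
    by (simp add: add_column_def count_replicate count_list_0_iff)
  have shifted: "(\<Prod>j\<in>Suc ` set mu. qpochhammer x (count_list (add_column m mu) j))
      = (\<Prod>i\<in>set mu. qpochhammer x (count_list mu i))"
    by (simp add: prod.reindex count_Suc)
  show ?thesis
  proof (cases "?r = 0")
    case True
    then have "set (add_column m mu) = Suc ` set mu"
      by (simp add: add_column_def)
    then show ?thesis
      using shifted True by simp
  next
    case False
    then have "set (add_column m mu) = insert 1 (Suc ` set mu)"
      by (auto simp: add_column_def)
    then show ?thesis
      using shifted one_notin count_1 by simp
  qed
qed

lemma a_part_conv_qpochhammer:
  "a_part la q = q ^ (sum_list la + 2 * n_part la) * (\<Prod>i\<in>set la. qpochhammer (1 / q) (count_list la i))"
  by (simp add: a_part_def qpochhammer_def power_one_over)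

lemma a_part_add_column:
  assumes "mu \<in> partitions_of N" "length mu \<le> m"
  shows "a_part (add_column m mu) q = q ^ (m * m) * qpochhammer (1 / q) (m - length mu) * a_part mu q"
proof -
  have "\<forall>y\<in>set mu. 0 < y"
    using assms(1) by (auto simp: partitions_of_def)
  moreover note square_eq_add_twice_choose_two[of m]
  ultimately show ?thesis
    using assms(2)
    by (simp add: a_part_conv_qpochhammer prod_qpochhammer_count_add_column sum_list_add_column
        n_part_add_column power_add algebra_simps)
qed

section \<open>Weighted counts of partitions by length\<close>

definition inv_aut_length :: "real \<Rightarrow> nat \<Rightarrow> nat \<Rightarrow> real" where
  "inv_aut_length q n m = (\<Sum>la | la \<in> partitions_of n \<and> length la = m. 1 / a_part la q)"

text \<open>Removing the first column of the partitions of \<open>n\<close> with \<open>m\<close> parts leaves the partitions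
  of \<open>n - m\<close> with at most \<open>m\<close> parts; this is their weighted count, on which the strong
  induction runs.\<close>
definition inv_aut_padded :: "real \<Rightarrow> nat \<Rightarrow> nat \<Rightarrow> real" where
  "inv_aut_padded q N M =
     (\<Sum>mu | mu \<in> partitions_of N \<and> length mu \<le> M. 1 / (a_part mu q * qpochhammer (1 / q) (M - length mu)))"

lemma inv_aut_length_eq_0: "n < m \<Longrightarrow> inv_aut_length q n m = 0"
  using length_le_of_partitions_of by (fastforce simp: inv_aut_length_def intro: sum.neutral)

lemma inv_aut_length_0_0: "inv_aut_length q 0 0 = 1"
  by (simp add: inv_aut_length_def partitions_of_0 a_part_def n_part_def)

lemma inv_aut_length_no_parts: "1 \<le> n \<Longrightarrow> inv_aut_length q n 0 = 0"
  by (auto simp: inv_aut_length_def partitions_of_def intro: sum.neutral)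

lemma sum_partitions_of_by_length:
  "(\<Sum>la\<in>partitions_of n. f (length la) / a_part la q) = (\<Sum>m\<le>n. f m * inv_aut_length q n m)"
proof -
  have "(\<Sum>la\<in>partitions_of n. f (length la) / a_part la q)
      = (\<Sum>m\<le>n. \<Sum>la | la \<in> partitions_of n \<and> length la = m. f (length la) / a_part la q)"
    by (rule sum.group[symmetric, OF finite_partitions_of]) (auto simp: length_le_of_partitions_of)
  also have "\<dots> = (\<Sum>m\<le>n. f m * inv_aut_length q n m)"
    by (rule sum.cong[OF refl]) (simp add: inv_aut_length_def sum_distrib_left)
  finally show ?thesis .
qed

lemma inv_aut_padded_eq_sum_length:
  "inv_aut_padded q N M = (\<Sum>i\<le>M. inv_aut_length q N i / qpochhammer (1 / q) (M - i))"
proof -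
  let ?S = "{mu. mu \<in> partitions_of N \<and> length mu \<le> M}"
  have "inv_aut_padded q N M
      = (\<Sum>i\<le>M. \<Sum>mu\<in>{mu\<in>?S. length mu = i}. 1 / (a_part mu q * qpochhammer (1 / q) (M - length mu)))"
    unfolding inv_aut_padded_def by (rule sum.group[symmetric]) (auto simp: finite_partitions_of)
  also have "\<dots> = (\<Sum>i\<le>M. inv_aut_length q N i / qpochhammer (1 / q) (M - i))"
  proof (rule sum.cong[OF refl])
    fix i assume "i \<in> {..M}"
    then have "{mu\<in>?S. length mu = i} = {la. la \<in> partitions_of N \<and> length la = i}"
      by auto
    then show "(\<Sum>mu\<in>{mu\<in>?S. length mu = i}. 1 / (a_part mu q * qpochhammer (1 / q) (M - length mu)))
        = inv_aut_length q N i / qpochhammer (1 / q) (M - i)"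
      by (simp add: inv_aut_length_def sum_divide_distrib)
  qed
  finally show ?thesis .
qed

lemma inv_aut_length_eq_padded:
  assumes "m \<le> n"
  shows "inv_aut_length q n m = (1 / q) ^ (m * m) * inv_aut_padded q (n - m) m"
proof -
  let ?B = "{la. la \<in> partitions_of n \<and> length la = m}"
  let ?A = "{mu. mu \<in> partitions_of (n - m) \<and> length mu \<le> m}"
  let ?w = "\<lambda>mu. 1 / (a_part mu q * qpochhammer (1 / q) (m - length mu))"
  have "inv_aut_length q n m = (\<Sum>mu\<in>?A. (1 / q) ^ (m * m) * ?w mu)"
    unfolding inv_aut_length_def
  proof (rule sum.reindex_bij_witness[where i = "add_column m" and j = remove_column])
    fix la assume la: "la \<in> ?B"
    then have "sorted_wrt (\<ge>) la" "\<forall>y\<in>set la. 0 < y"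
      by (auto simp: partitions_of_def)
    then show col: "add_column m (remove_column la) = la"
      using add_remove_column la by auto
    show mu: "remove_column la \<in> ?A"
      using remove_column_in_partitions_of[of la n] la by simp
    have "a_part la q = q ^ (m * m) * qpochhammer (1 / q) (m - length (remove_column la)) * a_part (remove_column la) q"
      using a_part_add_column[of "remove_column la" "n - m" m q] mu col by simp
    then show "(1 / q) ^ (m * m) * ?w (remove_column la) = 1 / a_part la q"
      by (simp add: power_one_over mult_ac)
  next
    fix mu assume mu: "mu \<in> ?A"
    then show "remove_column (add_column m mu) = mu"
      by (simp add: remove_add_column partitions_of_def)
    show "add_column m mu \<in> ?B"
      using mu add_column_in_partitions_of[of mu "n - m" m] length_add_column[of mu m] assms by auto
  qed
  also have "\<dots> = (1 / q) ^ (m * m) * inv_aut_padded q (n - m) m"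
    by (simp add: inv_aut_padded_def sum_distrib_left)
  finally show ?thesis .
qed

context
  fixes q :: real
  assumes q_gt_1: "1 < q"
begin

lemma inv_q_pos: "0 < 1 / q" and inv_q_less_1: "1 / q < 1"
  using q_gt_1 by simp_all

lemma inv_q_power_less_1: "1 \<le> j \<Longrightarrow> (1 / q) ^ j < 1"
  using inv_q_pos inv_q_less_1 by (simp add: power_less_one_iff)

lemma qpochhammer_inv_q_nonzero: "qpochhammer (1 / q) k \<noteq> 0"
  using qpochhammer_pos[OF inv_q_pos inv_q_less_1] by (simp add: less_imp_neq[symmetric])

lemma inv_aut_padded_closed_form:
  "inv_aut_padded q N M = (1 / q) ^ N * qbinomial (1 / q) (N + M - 1) N / qpochhammer (1 / q) M"
proof (induction N arbitrary: M rule: less_induct)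
  case (less N)
  show ?case
  proof (cases "N = 0")
    case True
    have "inv_aut_padded q 0 M = (\<Sum>i\<in>{0}. inv_aut_length q 0 i / qpochhammer (1 / q) (M - i))"
      unfolding inv_aut_padded_eq_sum_length by (rule sum.mono_neutral_right) (auto simp: inv_aut_length_eq_0)
    then show ?thesis
      using True by (simp add: inv_aut_length_0_0)
  next
    case False
    let ?t = "\<lambda>a. qbinomial (1 / q) M a * qbinomial (1 / q) (N - 1) (N - a) * (1 / q) ^ (a * (N - 1 + a - N))"
    have summand: "inv_aut_length q N i / qpochhammer (1 / q) (M - i) = (1 / q) ^ N * ?t i / qpochhammer (1 / q) M"
      if "1 \<le> i" "i \<le> N" "i \<le> M" for i
    proof -
      have "i \<noteq> 0"
        using that(1) by simp
      then obtain j where j: "i = Suc j"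
        using not0_implies_Suc by blast
      have "inv_aut_length q N i = (1 / q) ^ (i * i) * inv_aut_padded q (N - i) i"
        by (rule inv_aut_length_eq_padded[OF that(2)])
      also have "inv_aut_padded q (N - i) i = (1 / q) ^ (N - i) * qbinomial (1 / q) (N - 1) (N - i) / qpochhammer (1 / q) i"
        using less.IH[of "N - i" i] that by simp
      finally have length_eq: "inv_aut_length q N i
          = (1 / q) ^ (i * i) * (1 / q) ^ (N - i) * qbinomial (1 / q) (N - 1) (N - i) / qpochhammer (1 / q) i"
        by simp
      have "i * i + (N - i) = N + i * (N - 1 + i - N)"
        using j that by (simp add: algebra_simps)
      then have exps: "(1 / q) ^ (i * i) * (1 / q) ^ (N - i) = (1 / q) ^ N * (1 / q) ^ (i * (N - 1 + i - N))"
        by (metis power_add)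
      show ?thesis
        unfolding length_eq exps qbinomial_eq_div[OF inv_q_pos inv_q_less_1 that(3)]
        using qpochhammer_inv_q_nonzero by (simp add: field_simps)
    qed
    have "inv_aut_padded q N M = (\<Sum>i\<le>min M N. inv_aut_length q N i / qpochhammer (1 / q) (M - i))"
      unfolding inv_aut_padded_eq_sum_length by (rule sum.mono_neutral_right) (auto simp: inv_aut_length_eq_0)
    also have "\<dots> = (\<Sum>i\<le>min M N. (1 / q) ^ N * ?t i / qpochhammer (1 / q) M)"
    proof (rule sum.cong[OF refl])
      fix i assume "i \<in> {..min M N}"
      then show "inv_aut_length q N i / qpochhammer (1 / q) (M - i) = (1 / q) ^ N * ?t i / qpochhammer (1 / q) M"
        using summand[of i] False by (cases "i = 0") (auto simp: inv_aut_length_no_parts)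
    qed
    also have "\<dots> = (1 / q) ^ N * (\<Sum>i\<le>min M N. ?t i) / qpochhammer (1 / q) M"
      by (simp only: sum_distrib_left sum_divide_distrib)
    also have "(\<Sum>i\<le>min M N. ?t i) = (\<Sum>i\<le>N. ?t i)"
      by (rule sum.mono_neutral_left) auto
    also have "(\<Sum>i\<le>N. ?t i) = qbinomial (1 / q) (N + M - 1) N"
      using qbinomial_vandermonde[of "1 / q" M "N - 1" N] False by (simp add: add.commute)
    finally show ?thesis .
  qed
qed

lemma inv_aut_length_closed_form:
  assumes "1 \<le> m" "m \<le> n"
  shows "inv_aut_length q n m
    = (1 / q) ^ (m * m + (n - m)) * qbinomial (1 / q) (n - 1) (m - 1) / qpochhammer (1 / q) m"
proof -
  have "qbinomial (1 / q) (n - 1) (n - m) = qbinomial (1 / q) (n - 1) (m - 1)"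
    using qbinomial_symmetric[OF inv_q_pos inv_q_less_1, of "m - 1" "n - 1"] assms by simp
  moreover have "n - m + m - 1 = n - 1"
    using assms by simp
  ultimately show ?thesis
    using inv_aut_length_eq_padded[OF assms(2)] inv_aut_padded_closed_form[of "n - m" m]
    by (simp add: power_add)
qed

lemma prod_one_minus_power_mult_inv_aut_length:
  assumes "1 \<le> m" "m \<le> n"
  shows "(\<Prod>s=1..m - 1. 1 - q ^ s) * inv_aut_length q n m
    = - ((1 / q) ^ n / (1 - (1 / q) ^ n)) * ((-1) ^ m * (1 / q) ^ (m choose 2) * qbinomial (1 / q) n m)"
proof -
  obtain k where k: "m = Suc k"
    using assms(1) not0_implies_Suc by fastforce
  define c d where "c = 1 - (1 / q) ^ m" and "d = 1 - (1 / q) ^ n"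
  have "c \<noteq> 0" "d \<noteq> 0"
    using inv_q_power_less_1[of m] inv_q_power_less_1[of n] assms unfolding c_def d_def by simp_all
  have "(\<Prod>s=1..m - 1. 1 - q ^ s) * inv_aut_length q n m
      = ((-1) ^ k * q ^ (m choose 2) * qpochhammer (1 / q) k)
        * ((1 / q) ^ (m * m + (n - m)) * qbinomial (1 / q) (n - 1) (m - 1) / (qpochhammer (1 / q) k * c))"
  proof -
    have "(\<Prod>s=1..m - 1. 1 - q ^ s) = (-1) ^ k * q ^ (m choose 2) * qpochhammer (1 / q) k"
      using prod_one_minus_power[of q k] q_gt_1 k by simp
    moreover have "qpochhammer (1 / q) m = qpochhammer (1 / q) k * c"
      using k by (simp add: qpochhammer_Suc c_def)
    ultimately show ?thesis
      by (simp only: inv_aut_length_closed_form[OF assms])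
  qed
  also have "\<dots> = (-1) ^ k * (q ^ (m choose 2) * (1 / q) ^ (m * m + (n - m))) * (qbinomial (1 / q) (n - 1) (m - 1) / c)"
    using qpochhammer_inv_q_nonzero by (simp add: field_simps)
  also have "q ^ (m choose 2) * (1 / q) ^ (m * m + (n - m)) = (1 / q) ^ ((m choose 2) + n)"
  proof -
    have "m * m + (n - m) = (m choose 2) + ((m choose 2) + n)"
      using square_eq_add_twice_choose_two[of m] assms(2) by simp
    then have "(1 / q) ^ (m * m + (n - m)) = (1 / q) ^ (m choose 2) * (1 / q) ^ ((m choose 2) + n)"
      by (simp only: power_add)
    then show ?thesis
      using q_gt_1 by (simp add: power_one_over)
  qed
  also have "qbinomial (1 / q) (n - 1) (m - 1) / c = qbinomial (1 / q) n m / d"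
    using qbinomial_absorption[OF inv_q_pos inv_q_less_1 assms] \<open>c \<noteq> 0\<close> \<open>d \<noteq> 0\<close>
    unfolding c_def[symmetric] d_def[symmetric] by (simp add: field_simps)
  finally show ?thesis
    using k unfolding d_def by (simp add: power_add field_simps)
qed

lemma sum_partitions_of_prod_div_a_part:
  assumes "1 \<le> n"
  shows "(\<Sum>la\<in>partitions_of n. (\<Prod>s=1..length la - 1. 1 - q ^ s) / a_part la q) = 1 / (q ^ n - 1)"
proof -
  let ?c = "(1 / q) ^ n / (1 - (1 / q) ^ n)"
  let ?g = "\<lambda>m. (-1) ^ m * (1 / q) ^ (m choose 2) * qbinomial (1 / q) n m"
  obtain n' where n: "n = Suc n'"
    using assms not0_implies_Suc by fastforce
  have "(\<Sum>la\<in>partitions_of n. (\<Prod>s=1..length la - 1. 1 - q ^ s) / a_part la q)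
      = (\<Sum>m\<le>n. (\<Prod>s=1..m - 1. 1 - q ^ s) * inv_aut_length q n m)"
    by (rule sum_partitions_of_by_length)
  also have "\<dots> = (\<Sum>m\<le>n'. (\<Prod>s=1..Suc m - 1. 1 - q ^ s) * inv_aut_length q n (Suc m))"
    unfolding n sum.atMost_Suc_shift by (simp add: inv_aut_length_no_parts)
  also have "\<dots> = (\<Sum>m\<le>n'. - ?c * ?g (Suc m))"
    using n by (intro sum.cong refl prod_one_minus_power_mult_inv_aut_length) auto
  also have "\<dots> = - ?c * ((\<Sum>m\<le>n. ?g m) - ?g 0)"
    unfolding n sum.atMost_Suc_shift by (simp add: sum_distrib_left)
  also have "(\<Sum>m\<le>n. ?g m) = 0"
    by (rule qbinomial_alternating_sum[OF assms])
  finally show ?thesis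
    using q_gt_1 assms by (simp add: zero_choose_two power_one_over field_simps)
qed

end

theorem lemma6p2:
  fixes q n :: nat
  assumes "\<exists>p k. prime p \<and> 0 < k \<and> q = p ^ k"
    and "1 \<le> n"
  shows "(\<Sum>la\<in>partitions_of n.
            (\<Prod>s=1..length la - 1. (1 - real q ^ s)) / a_part la (real q))
         = 1 / (real q ^ n - 1)"
proof -
  obtain p k where "prime p" "0 < k" "q = p ^ k"
    using assms(1) by blast
  then have "1 < q"
    using prime_gt_1_nat one_less_power by blast
  then show ?thesis
    using sum_partitions_of_prod_div_a_part[of "real q" n] assms(2) by simp
qed

end
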